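(* Let $(V_n)_{n\in\mathbb{N}}$ be a quasi non-conforming approximation of $V$ in $X$. Then: (i) if $v_n\in V_{m_n}$ with $m_n\to\infty$ and $v_n\rightharpoonup v$ weakly in $X$, then $v\in V$. (ii) If $v_n\in V_{m_n}$ with $m_n\to\infty$, $\sup_n\|v_n\|_X<\infty$, and $v\in V$, then $v_n\rightharpoonup v$ weakly in $X$ if and only if $P_Hjv_n\rightharpoonup jv$ weakly in $H$. (iii) For every $h\in H$ there are $v_n\in V_{m_n}$ with $m_n\to\infty$ such that $jv_n\to h$ in $Y$.
   Context: An evolution triple $(V,H,j)$: $V$ reflexive Banach, $H$ Hilbert, $j:V\to H$ linear injective bounded with dense range. Let $(V,H,j)$, $(X,Y,j)$ be evolution triples with $V\subseteq X$, $\|\cdot\|_V=\|\cdot\|_X$ on $V$, $H\subseteq Y$, $(\cdot,\cdot)_H=(\cdot,\cdot)_Y$ on $H$, the embedding $X\to Y$ restricting to that of $V\to H$; $P_H:Y\to H$ is the orthogonal projection. $I=(0,T)$, $T<\infty$, $1<p<\infty$. A sequence of closed subspaces $(V_n)$ of $X$ is a quasi non-conforming approximation of $V$ in $X$ if (QNC.1) there is a dense $D\subseteq V$ such that each $v\in D$ is the $X$-limit of some $v_n\in V_n$, and (QNC.2) whenever $\boldsymbol{x}_n\in L^p(I,V_{m_n})$ with $m_n\to\infty$ and $\boldsymbol{x}_n\rightharpoonup\boldsymbol{x}$ in $L^p(I,X)$, then $\boldsymbol{x}\in L^p(I,V)$. *)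

theory Defs
  imports "HOL-Analysis.Analysis"
begin

definition bdd_lin_functional_on :: "'a::real_vector set \<Rightarrow> ('a \<Rightarrow> real) \<Rightarrow> ('a \<Rightarrow> real) \<Rightarrow> bool" where
  "bdd_lin_functional_on S N l \<longleftrightarrow>
     (\<forall>u\<in>S. \<forall>w\<in>S. l (u + w) = l u + l w) \<and>
     (\<forall>c. \<forall>u\<in>S. l (c *\<^sub>R u) = c * l u) \<and>
     (\<exists>C. \<forall>u\<in>S. \<bar>l u\<bar> \<le> C * N u)"

definition weak_conv_on :: "'a::real_vector set \<Rightarrow> ('a \<Rightarrow> real) \<Rightarrow> (nat \<Rightarrow> 'a) \<Rightarrow> 'a \<Rightarrow> bool" where
  "weak_conv_on S N xs x \<longleftrightarrow>
     (\<forall>l. bdd_lin_functional_on S N l \<longrightarrow> (\<lambda>n. l (xs n)) \<longlonglongrightarrow> l x)"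

definition dual_norm_on :: "'a::real_normed_vector set \<Rightarrow> ('a \<Rightarrow> real) \<Rightarrow> real" where
  "dual_norm_on S f = Sup {\<bar>f v\<bar> | v. v \<in> S \<and> norm v \<le> 1}"

text \<open>Elements of S* are
  represented by functions bounded linear on S, identified when they agree on S.\<close>
definition reflexive_on :: "'a::real_normed_vector set \<Rightarrow> bool" where
  "reflexive_on S \<longleftrightarrow>
    (\<forall>\<Phi> :: ('a \<Rightarrow> real) \<Rightarrow> real.
       ((\<forall>f g. bdd_lin_functional_on S norm f \<longrightarrow> bdd_lin_functional_on S norm g \<longrightarrow>
                 (\<forall>v\<in>S. f v = g v) \<longrightarrow> \<Phi> f = \<Phi> g) \<and>
        (\<forall>f g. bdd_lin_functional_on S norm f \<longrightarrow> bdd_lin_functional_on S norm g \<longrightarrow>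
                 \<Phi> (\<lambda>v. f v + g v) = \<Phi> f + \<Phi> g) \<and>
        (\<forall>c f. bdd_lin_functional_on S norm f \<longrightarrow> \<Phi> (\<lambda>v. c * f v) = c * \<Phi> f) \<and>
        (\<exists>C. \<forall>f. bdd_lin_functional_on S norm f \<longrightarrow> \<bar>\<Phi> f\<bar> \<le> C * dual_norm_on S f))
       \<longrightarrow> (\<exists>v\<in>S. \<forall>f. bdd_lin_functional_on S norm f \<longrightarrow> \<Phi> f = f v))"

definition orth_proj :: "'y::real_inner set \<Rightarrow> 'y \<Rightarrow> 'y" where
  "orth_proj H y = (THE h. h \<in> H \<and> (\<forall>k\<in>H. inner (y - h) k = 0))"

definition strongly_measurable_on :: "real set \<Rightarrow> (real \<Rightarrow> 'x::real_normed_vector) \<Rightarrow> bool" where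
  "strongly_measurable_on I u \<longleftrightarrow>
     (\<exists>s :: nat \<Rightarrow> real \<Rightarrow> 'x. (\<forall>k. simple_function (lebesgue_on I) (s k)) \<and>
        (AE t in lebesgue_on I. (\<lambda>k. s k t) \<longlonglongrightarrow> u t))"

definition Lp_fun :: "real set \<Rightarrow> real \<Rightarrow> (real \<Rightarrow> 'x::real_normed_vector) set" where
  "Lp_fun I p = {u. strongly_measurable_on I u \<and>
                    (\<integral>\<^sup>+ t. ennreal (norm (u t) powr p) \<partial>lebesgue_on I) < \<infinity>}"

definition Lp_norm :: "real set \<Rightarrow> real \<Rightarrow> (real \<Rightarrow> 'x::real_normed_vector) \<Rightarrow> real" where
  "Lp_norm I p u = (enn2real (\<integral>\<^sup>+ t. ennreal (norm (u t) powr p) \<partial>lebesgue_on I)) powr (1 / p)"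

definition Lp_bdd_lin_functional :: "real set \<Rightarrow> real \<Rightarrow> ((real \<Rightarrow> 'x::real_normed_vector) \<Rightarrow> real) \<Rightarrow> bool" where
  "Lp_bdd_lin_functional I p l \<longleftrightarrow>
     (\<forall>u\<in>Lp_fun I p. \<forall>w\<in>Lp_fun I p. l (\<lambda>t. u t + w t) = l u + l w) \<and>
     (\<forall>c. \<forall>u\<in>Lp_fun I p. l (\<lambda>t. c *\<^sub>R u t) = c * l u) \<and>
     (\<exists>C. \<forall>u\<in>Lp_fun I p. \<bar>l u\<bar> \<le> C * Lp_norm I p u)"

definition Lp_weak_conv :: "real set \<Rightarrow> real \<Rightarrow> (nat \<Rightarrow> real \<Rightarrow> 'x::real_normed_vector) \<Rightarrow> (real \<Rightarrow> 'x) \<Rightarrow> bool" where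
  "Lp_weak_conv I p xs x \<longleftrightarrow>
     (\<forall>l. Lp_bdd_lin_functional I p l \<longrightarrow> (\<lambda>n. l (xs n)) \<longlonglongrightarrow> l x)"

definition evolution_triple :: "'x::real_normed_vector set \<Rightarrow> 'y::real_inner set \<Rightarrow> ('x \<Rightarrow> 'y) \<Rightarrow> bool" where
  "evolution_triple V H j \<longleftrightarrow>
     subspace V \<and> complete V \<and> reflexive_on V \<and>
     subspace H \<and> complete H \<and>
     linear j \<and> (\<exists>C. \<forall>v\<in>V. norm (j v) \<le> C * norm v) \<and> inj_on j V \<and>
     j ` V \<subseteq> H \<and> H \<subseteq> closure (j ` V)"

definition quasi_nonconforming :: "real \<Rightarrow> real \<Rightarrow> 'x::real_normed_vector set \<Rightarrow> (nat \<Rightarrow> 'x set) \<Rightarrow> bool" where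
  "quasi_nonconforming T p V Vs \<longleftrightarrow>
     (\<forall>n. subspace (Vs n) \<and> closed (Vs n)) \<and>
     (\<exists>D. D \<subseteq> V \<and> V \<subseteq> closure D \<and>
        (\<forall>v\<in>D. \<exists>vs. (\<forall>n. vs n \<in> Vs n) \<and> vs \<longlonglongrightarrow> v)) \<and>
     (\<forall>(m :: nat \<Rightarrow> nat) xs x. filterlim m at_top sequentially \<longrightarrow>
        (\<forall>n. xs n \<in> Lp_fun {0<..<T} p \<and> (AE t in lebesgue_on {0<..<T}. xs n t \<in> Vs (m n))) \<longrightarrow>
        x \<in> Lp_fun {0<..<T} p \<longrightarrow>
        Lp_weak_conv {0<..<T} p xs x \<longrightarrow>
        (AE t in lebesgue_on {0<..<T}. x t \<in> V))"

end

theory Submission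
  imports Defs "HOL-Library.Diagonal_Subsequence"
begin

text \<open>(i) Constant-in-time functions carry weak convergence in X over to weak convergence in
  L^p(I,X), so (QNC.2) applied to constant sequences puts weak limits into V.
  (ii) P_H \<circ> j is bounded linear, which gives one direction. Conversely, reflexivity makes
  every subsequence of a bounded sequence have a weakly convergent subsequence: a weak cluster
  point exists by Tychonoff, and it is unique after a diagonal extraction because the injective
  map j into a Hilbert space separates points through inner products. Each such limit w lies in V
  by (i), and testing the convergence of P_H j v_n with j w - j v \<in> H gives w = v.
  (iii) j V is dense in H and D is dense in V, so a diagonal choice of approximants of elements
  of D in the V_n does it.\<close>

section \<open>Orthogonal projection onto a complete subspace\<close>

lemma infdist_less_imp_dist_less:
  assumes "A \<noteq> {}" "infdist x A < r"
  obtains a where "a \<in> A" "dist x a < r"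
  using assms by (auto simp: infdist_notempty cINF_less_iff)

lemma parallelogram_law:
  fixes a b :: "'a::real_inner"
  shows "(norm (a + b))\<^sup>2 + (norm (a - b))\<^sup>2 = 2 * (norm a)\<^sup>2 + 2 * (norm b)\<^sup>2"
  by (simp add: power2_norm_eq_inner inner_add inner_diff algebra_simps inner_commute)

text \<open>A minimising sequence is Cauchy by the parallelogram law.\<close>

lemma complete_subspace_nearest_point:
  fixes H :: "'y::real_inner set"
  assumes sH: "subspace H" and cH: "complete H"
  obtains g where "g \<in> H" "\<And>k. k \<in> H \<Longrightarrow> norm (y - g) \<le> norm (y - k)"
proof -
  define d where "d = infdist y H"
  have d0: "0 \<le> d" by (simp add: d_def infdist_nonneg)
  have d_le: "d \<le> norm (y - k)" if "k \<in> H" for k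
    using infdist_le[OF that, of y] by (simp add: d_def dist_norm)
  have "\<exists>h\<in>H. (norm (y - h))\<^sup>2 < d\<^sup>2 + 1 / Suc n" for n
  proof -
    have "d < sqrt (d\<^sup>2 + 1 / Suc n)"
      by (rule real_less_rsqrt) simp
    then obtain h where "h \<in> H" "norm (y - h) < sqrt (d\<^sup>2 + 1 / Suc n)"
      using infdist_less_imp_dist_less[of H y] subspace_0[OF sH] by (auto simp: d_def dist_norm)
    then show ?thesis
      using power_strict_mono[of "norm (y - h)" "sqrt (d\<^sup>2 + 1 / Suc n)" 2] by auto
  qed
  then obtain h where hH: "\<And>n. h n \<in> H" and hd: "\<And>n. (norm (y - h n))\<^sup>2 < d\<^sup>2 + 1 / Suc n"
    by metis
  have h_close: "(norm (h m - h n))\<^sup>2 \<le> 2 / Suc n + 2 / Suc m" for m n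
  proof -
    have "(1/2) *\<^sub>R (h n + h m) \<in> H"
      using sH hH by (simp add: subspace_add subspace_scale)
    moreover have "(y - h n) + (y - h m) = 2 *\<^sub>R (y - (1/2) *\<^sub>R (h n + h m))"
      by (simp add: algebra_simps scaleR_2)
    ultimately have "2 * d \<le> norm ((y - h n) + (y - h m))"
      using d_le by simp
    then have "4 * d\<^sup>2 \<le> (norm ((y - h n) + (y - h m)))\<^sup>2"
      using d0 power_mono[of "2 * d" _ 2] by (simp add: power_mult_distrib)
    then show ?thesis
      using parallelogram_law[of "y - h n" "y - h m"] hd[of n] hd[of m] by simp
  qed
  have "Cauchy h"
  proof (rule metric_CauchyI)
    fix e :: real assume "0 < e"
    obtain N :: nat where "4 / e\<^sup>2 < N"
      using reals_Archimedean2 by blast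
    then have N: "4 / e\<^sup>2 < Suc N" by simp
    have "(norm (h m - h n))\<^sup>2 < e\<^sup>2" if "N \<le> m" "N \<le> n" for m n
    proof -
      have "2 / real (Suc n) \<le> 2 / Suc N" "2 / real (Suc m) \<le> 2 / Suc N"
        using that by (simp_all add: frac_le)
      then have "2 / real (Suc n) + 2 / real (Suc m) \<le> 4 / Suc N"
        by simp
      also have "\<dots> < e\<^sup>2" using N \<open>0 < e\<close> by (simp add: field_simps)
      finally show ?thesis using h_close[of m n] by simp
    qed
    then have "dist (h m) (h n) < e" if "N \<le> m" "N \<le> n" for m n
      using that \<open>0 < e\<close> power_less_imp_less_base[of "norm (h m - h n)" 2 e]
      by (simp add: dist_norm)
    then show "\<exists>M. \<forall>m\<ge>M. \<forall>n\<ge>M. dist (h m) (h n) < e"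
      by blast
  qed
  then obtain g where gH: "g \<in> H" and hg: "h \<longlonglongrightarrow> g"
    using cH hH unfolding complete_def by blast
  have "(\<lambda>n. (norm (y - h n))\<^sup>2) \<longlonglongrightarrow> (norm (y - g))\<^sup>2"
    by (intro tendsto_intros hg)
  moreover have "(\<lambda>n. d\<^sup>2 + 1 / Suc n) \<longlonglongrightarrow> d\<^sup>2"
    using tendsto_add[OF tendsto_const LIMSEQ_inverse_real_of_nat] by (simp add: inverse_eq_divide)
  ultimately have "(norm (y - g))\<^sup>2 \<le> d\<^sup>2"
    by (rule LIMSEQ_le) (use hd in \<open>auto intro: less_imp_le\<close>)
  then have "norm (y - g) \<le> d"
    using d0 by (rule power2_le_imp_le)
  then show ?thesis
    using that[OF gH] d_le by (meson order_trans)
qed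

lemma nearest_point_orthogonal:
  fixes H :: "'y::real_inner set"
  assumes sH: "subspace H" and gH: "g \<in> H" and nearest: "\<And>k. k \<in> H \<Longrightarrow> norm (y - g) \<le> norm (y - k)"
    and kH: "k \<in> H"
  shows "inner (y - g) k = 0"
proof (cases "k = 0")
  case False
  define c where "c = inner (y - g) k"
  define q where "q = (norm k)\<^sup>2"
  have q: "0 < q" using False by (simp add: q_def)
  have expand: "(norm (y - g - t *\<^sub>R k))\<^sup>2 = (norm (y - g))\<^sup>2 - 2 * t * c + t\<^sup>2 * q" for t
    unfolding c_def q_def power2_norm_eq_inner
    by (simp add: inner_diff inner_commute power2_eq_square algebra_simps)
  have "g + (c / q) *\<^sub>R k \<in> H" using sH gH kH by (simp add: subspace_add subspace_scale)
  then have "(norm (y - g))\<^sup>2 \<le> (norm (y - g - (c / q) *\<^sub>R k))\<^sup>2"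
    using nearest by (simp add: power_mono algebra_simps)
  also have "\<dots> = (norm (y - g))\<^sup>2 - c\<^sup>2 / q"
    using q unfolding expand by (simp add: field_simps power2_eq_square)
  finally have "c\<^sup>2 / q \<le> 0" by simp
  then show ?thesis using q by (simp add: c_def divide_le_0_iff)
qed simp

lemma orth_proj_unique:
  fixes H :: "'y::real_inner set"
  assumes "subspace H"
    and "h \<in> H" "\<forall>k\<in>H. inner (y - h) k = 0" and "h' \<in> H" "\<forall>k\<in>H. inner (y - h') k = 0"
  shows "h = h'"
proof -
  have "h - h' \<in> H" using assms by (simp add: subspace_diff)
  then have "inner (h - h') (h - h') = inner (y - h') (h - h') - inner (y - h) (h - h')"
    by (simp add: inner_diff algebra_simps)
  also have "\<dots> = 0" using assms \<open>h - h' \<in> H\<close> by simp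
  finally show ?thesis by simp
qed

lemma orth_proj:
  fixes H :: "'y::real_inner set"
  assumes sH: "subspace H" and cH: "complete H"
  shows orth_proj_in: "orth_proj H y \<in> H"
    and orth_proj_orthogonal: "\<forall>k\<in>H. inner (y - orth_proj H y) k = 0"
proof -
  obtain g where "g \<in> H" "\<And>k. k \<in> H \<Longrightarrow> norm (y - g) \<le> norm (y - k)"
    using complete_subspace_nearest_point[OF sH cH] by blast
  then have "g \<in> H \<and> (\<forall>k\<in>H. inner (y - g) k = 0)"
    using nearest_point_orthogonal[OF sH] by blast
  then have "\<exists>!h. h \<in> H \<and> (\<forall>k\<in>H. inner (y - h) k = 0)"
    using orth_proj_unique[OF sH] by blast
  then have "orth_proj H y \<in> H \<and> (\<forall>k\<in>H. inner (y - orth_proj H y) k = 0)"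
    unfolding orth_proj_def by (rule theI')
  then show "orth_proj H y \<in> H" "\<forall>k\<in>H. inner (y - orth_proj H y) k = 0"
    by auto
qed

lemma orth_proj_eqI:
  fixes H :: "'y::real_inner set"
  assumes "subspace H" "complete H" "h \<in> H" "\<forall>k\<in>H. inner (y - h) k = 0"
  shows "orth_proj H y = h"
  using orth_proj_unique[OF assms(1) orth_proj[OF assms(1,2)] assms(3,4)] .

lemma orth_proj_id:
  fixes H :: "'y::real_inner set"
  assumes "subspace H" "complete H" "y \<in> H"
  shows "orth_proj H y = y"
  using orth_proj_eqI[OF assms] by simp

lemma inner_orth_proj:
  fixes H :: "'y::real_inner set"
  assumes "subspace H" "complete H" "k \<in> H"
  shows "inner (orth_proj H y) k = inner y k"
  using orth_proj_orthogonal[OF assms(1,2), of y] assms(3) by (simp add: inner_diff_left)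

lemma bounded_linear_orth_proj:
  fixes H :: "'y::real_inner set"
  assumes sH: "subspace H" and cH: "complete H"
  shows "bounded_linear (orth_proj H)"
proof (rule bounded_linear_intro)
  note P = orth_proj[OF sH cH]
  show "orth_proj H (y + z) = orth_proj H y + orth_proj H z" for y z
    using P[of y] P[of z] sH
    by (intro orth_proj_eqI[OF sH cH]) (simp_all add: subspace_add inner_diff_left inner_add_left)
  show "orth_proj H (c *\<^sub>R y) = c *\<^sub>R orth_proj H y" for c y
    using P[of y] sH
    by (intro orth_proj_eqI[OF sH cH]) (simp_all add: subspace_scale inner_diff_left)
  show "norm (orth_proj H y) \<le> norm y * 1" for y
  proof -
    let ?P = "orth_proj H y"
    have "orthogonal ?P (y - ?P)"
      using P by (simp add: orthogonal_def inner_commute)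
    then have "(norm y)\<^sup>2 = (norm ?P)\<^sup>2 + (norm (y - ?P))\<^sup>2"
      using norm_add_Pythagorean by fastforce
    then show ?thesis
      by (simp add: power2_le_imp_le)
  qed
qed

section \<open>Bounded linear functionals\<close>

lemma bdd_lin_functional_on_add:
  assumes "bdd_lin_functional_on S N f" "bdd_lin_functional_on S N g"
  shows "bdd_lin_functional_on S N (\<lambda>v. f v + g v)"
proof -
  obtain C D where "\<forall>u\<in>S. \<bar>f u\<bar> \<le> C * N u" "\<forall>u\<in>S. \<bar>g u\<bar> \<le> D * N u"
    using assms unfolding bdd_lin_functional_on_def by blast
  then have "\<forall>u\<in>S. \<bar>f u + g u\<bar> \<le> (C + D) * N u"
    by (auto simp: distrib_right intro: order_trans[OF abs_triangle_ineq add_mono])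
  then show ?thesis
    using assms[unfolded bdd_lin_functional_on_def] unfolding bdd_lin_functional_on_def
    by (auto simp: algebra_simps intro!: exI[of _ "C + D"])
qed

lemma bdd_lin_functional_on_scale:
  assumes "bdd_lin_functional_on S N f"
  shows "bdd_lin_functional_on S N (\<lambda>v. c * f v)"
proof -
  obtain C where "\<forall>u\<in>S. \<bar>f u\<bar> \<le> C * N u"
    using assms unfolding bdd_lin_functional_on_def by blast
  then have "\<forall>u\<in>S. \<bar>c * f u\<bar> \<le> (\<bar>c\<bar> * C) * N u"
    by (auto simp: abs_mult mult.assoc intro: mult_left_mono)
  then show ?thesis
    using assms[unfolded bdd_lin_functional_on_def] unfolding bdd_lin_functional_on_def
    by (auto simp: algebra_simps intro!: exI[of _ "\<bar>c\<bar> * C"])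
qed

lemma bdd_lin_functional_on_compose:
  fixes A :: "'x::real_normed_vector \<Rightarrow> 'y::real_normed_vector"
  assumes g: "bdd_lin_functional_on S norm g" and A: "bounded_linear A" and AS: "\<And>x. A x \<in> S"
  shows "bdd_lin_functional_on UNIV norm (\<lambda>x. g (A x))"
proof -
  obtain C where C: "\<forall>u\<in>S. \<bar>g u\<bar> \<le> C * norm u"
    using g unfolding bdd_lin_functional_on_def by blast
  obtain K where K: "\<And>x. norm (A x) \<le> norm x * K"
    using bounded_linear.bounded[OF A] by blast
  have "\<bar>g (A x)\<bar> \<le> (\<bar>C\<bar> * K) * norm x" for x
  proof -
    have "\<bar>g (A x)\<bar> \<le> \<bar>C\<bar> * norm (A x)"
      using C AS[of x] mult_right_mono[OF abs_ge_self[of C] norm_ge_zero[of "A x"]] by force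
    also have "\<dots> \<le> \<bar>C\<bar> * (norm x * K)"
      using K by (simp add: mult_left_mono)
    finally show ?thesis by (simp add: algebra_simps)
  qed
  with g AS show ?thesis
    unfolding bdd_lin_functional_on_def
    by (auto simp: linear_add[OF bounded_linear.linear[OF A]] linear_scale[OF bounded_linear.linear[OF A]])
qed

lemma bdd_lin_functional_on_inner_left: "bdd_lin_functional_on S norm (\<lambda>y. inner y d)"
  unfolding bdd_lin_functional_on_def
  by (auto simp: inner_add_left Cauchy_Schwarz_ineq2 mult.commute[of "norm d"] intro!: exI[of _ "norm d"])

lemma weak_conv_on_bounded_linear_image:
  assumes "weak_conv_on UNIV norm xs x" "bounded_linear A" "\<And>x. A x \<in> S"
  shows "weak_conv_on S norm (\<lambda>n. A (xs n)) (A x)"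
  using assms bdd_lin_functional_on_compose unfolding weak_conv_on_def by blast

lemma dual_norm_on:
  fixes f :: "'x::real_normed_vector \<Rightarrow> real"
  assumes f: "bdd_lin_functional_on UNIV norm f"
  shows dual_norm_on_nonneg: "0 \<le> dual_norm_on UNIV f"
    and dual_norm_on_bound: "\<bar>f x\<bar> \<le> dual_norm_on UNIV f * norm x"
proof -
  obtain C where C: "\<And>u. \<bar>f u\<bar> \<le> C * norm u"
    using f unfolding bdd_lin_functional_on_def by blast
  have scale: "f (c *\<^sub>R u) = c * f u" for c u
    using f unfolding bdd_lin_functional_on_def by blast
  have bdd: "bdd_above {\<bar>f v\<bar> | v. v \<in> UNIV \<and> norm v \<le> 1}"
  proof (rule bdd_aboveI[where M="\<bar>C\<bar>"], clarify)
    fix v :: 'x assume "norm v \<le> 1"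
    then have "C * norm v \<le> \<bar>C\<bar>"
      using mult_right_mono[OF abs_ge_self[of C] norm_ge_zero[of v]] mult_left_le[of "norm v" "\<bar>C\<bar>"]
      by simp
    then show "\<bar>f v\<bar> \<le> \<bar>C\<bar>" using C[of v] by linarith
  qed
  have unit: "\<bar>f v\<bar> \<le> dual_norm_on UNIV f" if "norm v \<le> 1" for v
    unfolding dual_norm_on_def using that by (intro cSup_upper[OF _ bdd]) auto
  show "0 \<le> dual_norm_on UNIV f"
    using unit[of 0] by simp
  show "\<bar>f x\<bar> \<le> dual_norm_on UNIV f * norm x"
  proof (cases "x = 0")
    case True
    then show ?thesis using scale[of 0 0] unit[of 0] by simp
  next
    case False
    have "f x = norm x * f ((1 / norm x) *\<^sub>R x)"
      using False by (simp add: scale)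
    moreover have "\<bar>f ((1 / norm x) *\<^sub>R x)\<bar> \<le> dual_norm_on UNIV f"
      using False by (intro unit) simp
    ultimately show ?thesis
      by (simp add: abs_mult mult.commute mult_left_mono)
  qed
qed

section \<open>Weak cluster points in reflexive spaces\<close>

lemma cluster_point_in_closed:
  assumes "inf (nhds z) F \<noteq> bot" "closed S" "eventually (\<lambda>y. y \<in> S) F"
  shows "z \<in> S"
proof (rule ccontr)
  assume "z \<notin> S"
  then have "eventually (\<lambda>y. y \<in> - S) (nhds z)"
    using \<open>closed S\<close> by (intro eventually_nhds_in_open) auto
  then have "eventually (\<lambda>_. False) (inf (nhds z) F)"
    using assms(3) unfolding eventually_inf by blast
  with assms(1) show False by simp
qed

lemma compact_PiE_UNIV:
  fixes S :: "'i \<Rightarrow> 'a::topological_space set"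
  assumes "\<And>i. compact (S i)"
  shows "compact (Pi\<^sub>E UNIV S)"
  using compactin_PiE[of "\<lambda>_. euclidean" UNIV S] assms by (simp add: euclidean_product_topology)

lemma reflexive_onE:
  assumes "reflexive_on S"
    and "\<And>f g. bdd_lin_functional_on S norm f \<Longrightarrow> bdd_lin_functional_on S norm g \<Longrightarrow>
           (\<forall>v\<in>S. f v = g v) \<Longrightarrow> \<Phi> f = \<Phi> g"
    and "\<And>f g. bdd_lin_functional_on S norm f \<Longrightarrow> bdd_lin_functional_on S norm g \<Longrightarrow>
           \<Phi> (\<lambda>v. f v + g v) = \<Phi> f + \<Phi> g"
    and "\<And>c f. bdd_lin_functional_on S norm f \<Longrightarrow> \<Phi> (\<lambda>v. c * f v) = c * \<Phi> f"
    and "\<And>f. bdd_lin_functional_on S norm f \<Longrightarrow> \<bar>\<Phi> f\<bar> \<le> C * dual_norm_on S f"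
  obtains v where "v \<in> S" "\<And>f. bdd_lin_functional_on S norm f \<Longrightarrow> \<Phi> f = f v"
  using assms unfolding reflexive_on_def by blast

definition weak_cluster_point :: "'a filter \<Rightarrow> ('a \<Rightarrow> 'x::real_normed_vector) \<Rightarrow> 'x \<Rightarrow> bool" where
  "weak_cluster_point F x w \<longleftrightarrow>
     (\<forall>f. bdd_lin_functional_on UNIV norm f \<longrightarrow>
        (\<forall>S. closed S \<longrightarrow> eventually (\<lambda>k. f (x k) \<in> S) F \<longrightarrow> f w \<in> S))"

lemma weak_cluster_point_tendsto:
  assumes w: "weak_cluster_point F x w" and f: "bdd_lin_functional_on UNIV norm f"
    and lim: "((\<lambda>k. f (x k)) \<longlongrightarrow> L) F"
  shows "f w = L"
proof -
  have "dist (f w) L \<le> e" if "0 < e" for e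
  proof -
    have "eventually (\<lambda>k. f (x k) \<in> cball L e) F"
      using tendstoD[OF lim that] by eventually_elim (simp add: dist_commute)
    then have "f w \<in> cball L e"
      using w f closed_cball unfolding weak_cluster_point_def by blast
    then show ?thesis by (simp add: dist_commute)
  qed
  then have "dist (f w) L \<le> 0"
    by (rule field_le_epsilon) simp
  then show ?thesis by simp
qed

text \<open>Reflexivity replaces weak-* compactness of the bidual: by Tychonoff, the values of all
  bounded functionals along x have a cluster point \<open>\<Phi>\<close> in a product of intervals, and
  \<open>\<Phi>\<close> is a bounded linear functional on the dual, hence evaluation at some w. Functions
  that are not bounded linear functionals are sent to 0, so that the values stay in a compact
  product.\<close>

lemma weak_cluster_point_exists:
  fixes x :: "'a \<Rightarrow> 'x::real_normed_vector"
  assumes R: "reflexive_on (UNIV :: 'x set)" and M: "\<And>k. norm (x k) \<le> M" and F: "F \<noteq> bot"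
  obtains w where "weak_cluster_point F x w"
proof -
  let ?bdd = "bdd_lin_functional_on (UNIV :: 'x set) norm"
  define a where "a k = (\<lambda>f. if ?bdd f then f (x k) else 0)" for k
  define K where "K = Pi\<^sub>E UNIV (\<lambda>f. cball (0::real) (if ?bdd f then dual_norm_on UNIV f * M else 0))"
  have aK: "a k \<in> K" for k
  proof -
    have "\<bar>f (x k)\<bar> \<le> dual_norm_on UNIV f * M" if "?bdd f" for f
      using dual_norm_on_bound[OF that, of "x k"] mult_left_mono[OF M dual_norm_on_nonneg[OF that]]
      by (rule order_trans)
    then show ?thesis by (auto simp: K_def a_def PiE_iff)
  qed
  have "compact K"
    unfolding K_def by (rule compact_PiE_UNIV) simp
  moreover have "filtermap a F \<noteq> bot"
    using F by (simp add: filtermap_bot_iff)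
  moreover have "eventually (\<lambda>\<Psi>. \<Psi> \<in> K) (filtermap a F)"
    using aK by (simp add: eventually_filtermap)
  ultimately obtain \<Phi> where "\<Phi> \<in> K" and \<Phi>: "inf (nhds \<Phi>) (filtermap a F) \<noteq> bot"
    unfolding compact_filter by blast
  have \<Phi>_closed: "\<Phi> \<in> S" if "closed S" "eventually (\<lambda>k. a k \<in> S) F" for S
    using cluster_point_in_closed[OF \<Phi> that(1)] that(2) by (simp add: eventually_filtermap)
  obtain w where w: "\<And>f. ?bdd f \<Longrightarrow> \<Phi> f = f w"
  proof (rule reflexive_onE[OF R, of \<Phi>])
    fix f g :: "'x \<Rightarrow> real" assume "\<forall>v\<in>UNIV. f v = g v"
    then show "\<Phi> f = \<Phi> g" by (simp add: fun_eq_iff[symmetric])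
  next
    fix f g assume f: "?bdd f" and g: "?bdd g"
    show "\<Phi> (\<lambda>v. f v + g v) = \<Phi> f + \<Phi> g"
      using bdd_lin_functional_on_add[OF f g] f g
      by (intro \<Phi>_closed[of "{\<Psi>. \<Psi> (\<lambda>v. f v + g v) = \<Psi> f + \<Psi> g}", simplified])
        (auto simp: a_def intro!: closed_Collect_eq continuous_intros)
  next
    fix c f assume f: "?bdd f"
    show "\<Phi> (\<lambda>v. c * f v) = c * \<Phi> f"
      using bdd_lin_functional_on_scale[OF f] f
      by (intro \<Phi>_closed[of "{\<Psi>. \<Psi> (\<lambda>v. c * f v) = c * \<Psi> f}", simplified])
        (auto simp: a_def intro!: closed_Collect_eq continuous_intros)
  next
    fix f assume "?bdd f"
    then show "\<bar>\<Phi> f\<bar> \<le> M * dual_norm_on UNIV f"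
      using PiE_mem[OF \<open>\<Phi> \<in> K\<close>[unfolded K_def] UNIV_I, of f] by (simp add: mult.commute)
  qed auto
  have "weak_cluster_point F x w"
    unfolding weak_cluster_point_def
  proof (intro allI impI)
    fix f S assume f: "?bdd f" and "closed S" and ev: "eventually (\<lambda>k. f (x k) \<in> S) F"
    have "closed ((\<lambda>\<Psi>. \<Psi> f) -` S)"
      using \<open>closed S\<close> continuous_on_closed_vimage[of UNIV "\<lambda>\<Psi>. \<Psi> f"] by auto
    moreover have "eventually (\<lambda>k. a k \<in> (\<lambda>\<Psi>. \<Psi> f) -` S) F"
      using ev f by (simp add: a_def)
    ultimately show "f w \<in> S"
      using \<Phi>_closed w[OF f] by fastforce
  qed
  then show ?thesis by (rule that)
qed

section \<open>Weakly convergent subsequences\<close>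

lemma bounded_seqs_diagonal_convergent:
  fixes a :: "nat \<Rightarrow> nat \<Rightarrow> real"
  assumes bounded: "\<And>m. bounded (range (a m))"
  obtains s where "strict_mono s" "\<And>m. convergent (\<lambda>k. a m (s k))"
proof -
  interpret D: subseqs "\<lambda>m s. convergent (\<lambda>k. a m (s k))"
  proof
    fix m and s :: "nat \<Rightarrow> nat"
    have "bounded (range (\<lambda>k. a m (s k)))"
      using bounded[of m] by (rule bounded_subset) auto
    then obtain l r where "strict_mono r" "((\<lambda>k. a m (s k)) \<circ> r) \<longlonglongrightarrow> l"
      using bounded_imp_convergent_subsequence by blast
    then show "\<exists>r. strict_mono r \<and> convergent (\<lambda>k. a m ((s \<circ> r) k))"
      by (auto simp: convergent_def o_def)
  qed
  have "convergent (\<lambda>k. a m (D.diagseq k))" for m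
  proof -
    have "convergent (\<lambda>k. a m ((D.diagseq \<circ> (+) (Suc m)) k))"
    proof (rule D.diagseq_holds)
      fix r s :: "nat \<Rightarrow> nat" and n
      assume "strict_mono r" "convergent (\<lambda>k. a n (s k))"
      then show "convergent (\<lambda>k. a n ((s \<circ> r) k))"
        using convergent_subseq_convergent[of "\<lambda>k. a n (s k)" r] by (simp add: o_def)
    qed
    then have "convergent (\<lambda>k. a m (D.diagseq (k + Suc m)))"
      by (simp add: o_def add.commute)
    then show ?thesis
      by (rule convergent_ignore_initial_segment[THEN iffD1])
  qed
  then show ?thesis
    using that D.subseq_diagseq by blast
qed

lemma subseq_subseq_LIMSEQ:
  assumes "\<And>r :: nat \<Rightarrow> nat. strict_mono r \<Longrightarrow> \<exists>s :: nat \<Rightarrow> nat. strict_mono s \<and> (X \<circ> r \<circ> s) \<longlonglongrightarrow> L"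
  shows "X \<longlonglongrightarrow> L"
proof (rule topological_tendstoI, rule ccontr)
  fix S assume "open S" "L \<in> S" and not_ev: "\<not> eventually (\<lambda>n. X n \<in> S) sequentially"
  obtain r :: "nat \<Rightarrow> nat" where r: "strict_mono r" and outside: "\<And>n. X (r n) \<notin> S"
    using not_eventually_sequentiallyD[OF not_ev] by blast
  obtain s where "strict_mono s" "(X \<circ> r \<circ> s) \<longlonglongrightarrow> L"
    using assms[OF r] by blast
  then have "eventually (\<lambda>n. X (r (s n)) \<in> S) sequentially"
    using \<open>open S\<close> \<open>L \<in> S\<close> unfolding tendsto_def by (simp add: o_def)
  then show False
    using outside by (simp add: eventually_sequentially)
qed

lemma weak_conv_on_subseq_subseqI:
  assumes "\<And>r :: nat \<Rightarrow> nat. strict_mono r \<Longrightarrow>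
             \<exists>s :: nat \<Rightarrow> nat. strict_mono s \<and> weak_conv_on S N (xs \<circ> r \<circ> s) x"
  shows "weak_conv_on S N xs x"
  unfolding weak_conv_on_def
proof (intro allI impI subseq_subseq_LIMSEQ)
  fix l and r :: "nat \<Rightarrow> nat" assume "bdd_lin_functional_on S N l" "strict_mono r"
  then show "\<exists>s. strict_mono s \<and> ((\<lambda>n. l (xs n)) \<circ> r \<circ> s) \<longlonglongrightarrow> l x"
    using assms unfolding weak_conv_on_def by (fastforce simp: o_def)
qed

lemma weak_conv_if_unique_weak_cluster_point:
  fixes x :: "nat \<Rightarrow> 'x::real_normed_vector"
  assumes R: "reflexive_on (UNIV :: 'x set)" and M: "\<And>k. norm (x k) \<le> M"
    and unique: "\<And>F w. F \<noteq> bot \<Longrightarrow> F \<le> sequentially \<Longrightarrow> weak_cluster_point F x w \<Longrightarrow> w = w0"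
  shows "weak_conv_on UNIV norm x w0"
  unfolding weak_conv_on_def
proof (intro allI impI, rule ccontr)
  fix f assume f: "bdd_lin_functional_on UNIV norm f" and "\<not> (\<lambda>n. f (x n)) \<longlonglongrightarrow> f w0"
  then obtain e where "0 < e" and "\<not> eventually (\<lambda>n. dist (f (x n)) (f w0) < e) sequentially"
    unfolding tendsto_iff by blast
  then obtain r :: "nat \<Rightarrow> nat" where r: "strict_mono r" and far: "\<And>n. e \<le> dist (f (x (r n))) (f w0)"
    using not_eventually_sequentiallyD by (metis not_less)
  define F where "F = filtermap r sequentially"
  have "F \<noteq> bot" "F \<le> sequentially"
    using filterlim_subseq[OF r] by (simp_all add: F_def filtermap_bot_iff filterlim_def)
  moreover obtain w where w: "weak_cluster_point F x w"
    by (rule weak_cluster_point_exists[OF R M \<open>F \<noteq> bot\<close>])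
  ultimately have "w = w0"
    by (rule unique)
  have "closed {y. e \<le> dist y (f w0)}"
    by (intro closed_Collect_le continuous_intros)
  moreover have "eventually (\<lambda>k. f (x k) \<in> {y. e \<le> dist y (f w0)}) F"
    using far by (simp add: F_def eventually_filtermap)
  ultimately have "e \<le> dist (f w) (f w0)"
    using w f unfolding weak_cluster_point_def by blast
  with \<open>w = w0\<close> \<open>0 < e\<close> show False by simp
qed

text \<open>All weak cluster points w have the same inner products with the j (x m); hence
  j w1 - j w2 is orthogonal to every j (x k), and therefore to j w1 and j w2 themselves.\<close>

lemma weak_cluster_points_eq:
  fixes j :: "'x::real_normed_vector \<Rightarrow> 'y::real_inner"
  assumes j: "bounded_linear j" "inj j"
    and conv: "\<And>m. convergent (\<lambda>k. inner (j (x k)) (j (x m)))"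
    and w1: "F1 \<le> sequentially" "weak_cluster_point F1 x w1"
    and w2: "F2 \<le> sequentially" "weak_cluster_point F2 x w2"
  shows "w1 = w2"
proof -
  have inner_j: "bdd_lin_functional_on UNIV norm (\<lambda>v. inner (j v) y)" for y
    using bdd_lin_functional_on_compose[OF bdd_lin_functional_on_inner_left[of UNIV] j(1)] by simp
  have gram: "inner (j w) (j (x m)) = lim (\<lambda>k. inner (j (x k)) (j (x m)))"
    if "F \<le> sequentially" "weak_cluster_point F x w" for F w m
    using weak_cluster_point_tendsto[OF that(2) inner_j]
      tendsto_mono[OF that(1) conv[of m, unfolded convergent_LIMSEQ_iff]] by blast
  define z where "z = j w1 - j w2"
  have "inner (j (x k)) z = 0" for k
    using gram[OF w1, of k] gram[OF w2, of k] by (simp add: z_def inner_diff_right inner_commute)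
  then have "inner (j w) z = 0" if "weak_cluster_point F x w" for F w
    using weak_cluster_point_tendsto[OF that inner_j, of z] by simp
  then have "inner z z = 0"
    using w1(2) w2(2) by (simp add: z_def inner_diff_left)
  then show ?thesis
    using j(2) by (simp add: z_def inj_eq)
qed

lemma weakly_convergent_subseq:
  fixes u :: "nat \<Rightarrow> 'x::real_normed_vector" and j :: "'x \<Rightarrow> 'y::real_inner"
  assumes R: "reflexive_on (UNIV :: 'x set)" and j: "bounded_linear j" "inj j"
    and M: "\<And>n. norm (u n) \<le> M"
  obtains s w where "strict_mono s" "weak_conv_on UNIV norm (u \<circ> s) w"
proof -
  obtain K where K: "\<And>x. norm (j x) \<le> norm x * K" and "0 < K"
    using bounded_linear.pos_bounded[OF j(1)] by blast
  have "\<bar>inner (j (u k)) (j (u m))\<bar> \<le> M * K * norm (j (u m))" for m k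
  proof -
    have "norm (j (u k)) \<le> M * K"
      by (rule order_trans[OF K mult_right_mono[OF M less_imp_le[OF \<open>0 < K\<close>]]])
    then show ?thesis
      using Cauchy_Schwarz_ineq2[of "j (u k)" "j (u m)"] mult_right_mono[of _ _ "norm (j (u m))"]
      by (meson norm_ge_zero order_trans)
  qed
  then have "bounded (range (\<lambda>k. inner (j (u k)) (j (u m))))" for m
    unfolding bounded_iff by (auto simp: real_norm_def)
  then obtain s where s: "strict_mono s" and conv: "\<And>m. convergent (\<lambda>k. inner (j (u (s k))) (j (u m)))"
    using bounded_seqs_diagonal_convergent[of "\<lambda>m k. inner (j (u k)) (j (u m))"] by blast
  have M': "\<And>k. norm ((u \<circ> s) k) \<le> M"
    using M by simp
  obtain w where w: "weak_cluster_point sequentially (u \<circ> s) w"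
    by (rule weak_cluster_point_exists[where x = "u \<circ> s", OF R M' sequentially_bot])
  have "weak_conv_on UNIV norm (u \<circ> s) w"
    using weak_cluster_points_eq[OF j _ _ w] conv
    by (intro weak_conv_if_unique_weak_cluster_point[OF R M']) (auto simp: o_def)
  with s show ?thesis
    using that by blast
qed

lemma Lp_const:
  fixes c :: "'x::real_normed_vector"
  assumes T: "0 < T" and p: "0 < p"
  shows Lp_fun_const: "(\<lambda>t. c) \<in> Lp_fun {0<..<T} p"
    and Lp_norm_const: "Lp_norm {0<..<T} p (\<lambda>t. c) = norm c * T powr (1 / p)"
proof -
  have integral: "(\<integral>\<^sup>+ t. ennreal (norm c powr p) \<partial>lebesgue_on {0<..<T}) = ennreal (norm c powr p * T)"
    using T by (simp add: emeasure_restrict_space ennreal_mult)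
  have "strongly_measurable_on {0<..<T} (\<lambda>t. c)"
    unfolding strongly_measurable_on_def by (rule exI[of _ "\<lambda>k t. c"]) simp
  then show "(\<lambda>t. c) \<in> Lp_fun {0<..<T} p"
    unfolding Lp_fun_def using integral by simp
  have "Lp_norm {0<..<T} p (\<lambda>t. c) = (norm c powr p * T) powr (1 / p)"
    unfolding Lp_norm_def integral using T by simp
  also have "\<dots> = norm c * T powr (1 / p)"
    using p by (simp add: powr_mult powr_powr)
  finally show "Lp_norm {0<..<T} p (\<lambda>t. c) = norm c * T powr (1 / p)" .
qed

lemma Lp_weak_conv_const:
  fixes vs :: "nat \<Rightarrow> 'x::real_normed_vector"
  assumes T: "0 < T" and p: "0 < p" and wc: "weak_conv_on UNIV norm vs v"
  shows "Lp_weak_conv {0<..<T} p (\<lambda>n t. vs n) (\<lambda>t. v)"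
  unfolding Lp_weak_conv_def
proof (intro allI impI)
  let ?I = "{0<..<T}"
  fix l :: "(real \<Rightarrow> 'x) \<Rightarrow> real" assume "Lp_bdd_lin_functional ?I p l"
  then obtain C where add: "\<forall>u\<in>Lp_fun ?I p. \<forall>w\<in>Lp_fun ?I p. l (\<lambda>t. u t + w t) = l u + l w"
    and scale: "\<forall>c. \<forall>u\<in>Lp_fun ?I p. l (\<lambda>t. c *\<^sub>R u t) = c * l u"
    and bound: "\<forall>u\<in>Lp_fun ?I p. \<bar>l u\<bar> \<le> C * Lp_norm ?I p u"
    unfolding Lp_bdd_lin_functional_def by blast
  have "bdd_lin_functional_on UNIV norm (\<lambda>x. l (\<lambda>t. x))"
    unfolding bdd_lin_functional_on_def
  proof (intro conjI ballI allI exI)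
    fix x y :: 'x
    show "l (\<lambda>t. x + y) = l (\<lambda>t. x) + l (\<lambda>t. y)"
      using add Lp_fun_const[OF T p, of x] Lp_fun_const[OF T p, of y] by auto
    fix c
    show "l (\<lambda>t. c *\<^sub>R x) = c * l (\<lambda>t. x)"
      using scale Lp_fun_const[OF T p, of x] by auto
    show "\<bar>l (\<lambda>t. x)\<bar> \<le> (C * T powr (1 / p)) * norm x"
      using bspec[OF bound Lp_fun_const[OF T p, of x]] by (simp add: Lp_norm_const[OF T p] algebra_simps)
  qed
  with wc show "(\<lambda>n. l (\<lambda>t. vs n)) \<longlonglongrightarrow> l (\<lambda>t. v)"
    unfolding weak_conv_on_def by blast
qed

lemma AE_lebesgue_on_interval_const:
  assumes "0 < (T :: real)" "AE t in lebesgue_on {0<..<T}. P"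
  shows P
proof -
  have "emeasure (lebesgue_on {0<..<T}) {0<..<T} = ennreal T"
    using assms(1) by (simp add: emeasure_restrict_space)
  then have "ae_filter (lebesgue_on {0<..<T}) \<noteq> bot"
    using assms(1) by (simp add: ae_filter_eq_bot_iff)
  with assms(2) show P
    by (simp add: eventually_const_iff)
qed

lemma quasi_nonconforming_weak_limit:
  fixes V :: "'x::real_normed_vector set"
  assumes T: "0 < T" and p: "1 < p" and qnc: "quasi_nonconforming T p V Vs"
    and m: "filterlim m at_top sequentially" and vs: "\<And>n. vs n \<in> Vs (m n)"
    and wc: "weak_conv_on UNIV norm vs v"
  shows "v \<in> V"
proof -
  have p0: "0 < p" using p by simp
  have "AE t in lebesgue_on {0<..<T}. v \<in> V"
    using qnc[unfolded quasi_nonconforming_def, THEN conjunct2, THEN conjunct2, rule_format,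
        of m "\<lambda>n t. vs n" "\<lambda>t. v"] m vs Lp_fun_const[OF T p0] Lp_weak_conv_const[OF T p0 wc] by auto
  then show ?thesis
    using AE_lebesgue_on_interval_const[OF T] by blast
qed

lemma weak_limit_eq_of_proj_weak_conv:
  fixes V :: "'x::real_normed_vector set" and H :: "'y::real_inner set"
  assumes j: "bounded_linear j" "inj j" and sH: "subspace H" and cH: "complete H"
    and jVH: "j ` V \<subseteq> H" and "v \<in> V" "w \<in> V"
    and wH: "weak_conv_on H norm (\<lambda>n. orth_proj H (j (vs n))) (j v)"
    and q: "strict_mono q" and wq: "weak_conv_on UNIV norm (vs \<circ> q) w"
  shows "w = v"
proof -
  define d where "d = j w - j v"
  have "d \<in> H"
    using jVH \<open>w \<in> V\<close> \<open>v \<in> V\<close> sH by (auto simp: d_def intro: subspace_diff)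
  have "(\<lambda>n. inner (orth_proj H (j (vs n))) d) \<longlonglongrightarrow> inner (j v) d"
    using wH bdd_lin_functional_on_inner_left[of H d] unfolding weak_conv_on_def by blast
  then have "(\<lambda>n. inner (j (vs n)) d) \<longlonglongrightarrow> inner (j v) d"
    by (simp add: inner_orth_proj[OF sH cH \<open>d \<in> H\<close>])
  then have "(\<lambda>k. inner (j ((vs \<circ> q) k)) d) \<longlonglongrightarrow> inner (j v) d"
    using LIMSEQ_subseq_LIMSEQ[OF _ q] by (simp add: o_def)
  moreover have "(\<lambda>k. inner (j ((vs \<circ> q) k)) d) \<longlonglongrightarrow> inner (j w) d"
    using weak_conv_on_bounded_linear_image[OF wq j(1), of UNIV] bdd_lin_functional_on_inner_left[of UNIV d]
    unfolding weak_conv_on_def by (simp add: o_def) blast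
  ultimately have "inner d d = 0"
    using LIMSEQ_unique by (fastforce simp: d_def inner_diff_left)
  then show ?thesis
    using j(2) by (simp add: d_def inj_eq)
qed

lemma quasi_nonconforming_weak_conv_iff:
  fixes V :: "'x::real_normed_vector set" and H :: "'y::real_inner set"
  assumes T: "0 < T" and p: "1 < p" and qnc: "quasi_nonconforming T p V Vs"
    and R: "reflexive_on (UNIV :: 'x set)" and j: "bounded_linear j" "inj j"
    and sH: "subspace H" and cH: "complete H" and jVH: "j ` V \<subseteq> H"
    and m: "filterlim m at_top sequentially" and vs: "\<And>n. vs n \<in> Vs (m n)"
    and bdd: "bdd_above (range (\<lambda>n. norm (vs n)))" and vV: "v \<in> V"
  shows "weak_conv_on UNIV norm vs v \<longleftrightarrow> weak_conv_on H norm (\<lambda>n. orth_proj H (j (vs n))) (j v)"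
proof
  assume wc: "weak_conv_on UNIV norm vs v"
  have "weak_conv_on H norm (\<lambda>n. orth_proj H (j (vs n))) (orth_proj H (j v))"
    by (rule weak_conv_on_bounded_linear_image[OF wc
          bounded_linear_compose[OF bounded_linear_orth_proj[OF sH cH] j(1)] orth_proj_in[OF sH cH]])
  moreover have "orth_proj H (j v) = j v"
    using jVH vV by (intro orth_proj_id[OF sH cH]) auto
  ultimately show "weak_conv_on H norm (\<lambda>n. orth_proj H (j (vs n))) (j v)"
    by simp
next
  assume wH: "weak_conv_on H norm (\<lambda>n. orth_proj H (j (vs n))) (j v)"
  obtain M where M: "\<And>n. norm (vs n) \<le> M"
    using bdd unfolding bdd_above_def by auto
  show "weak_conv_on UNIV norm vs v"
  proof (rule weak_conv_on_subseq_subseqI)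
    fix r :: "nat \<Rightarrow> nat" assume r: "strict_mono r"
    obtain s w where s: "strict_mono s" and ws: "weak_conv_on UNIV norm (vs \<circ> r \<circ> s) w"
      using weakly_convergent_subseq[OF R j, of "vs \<circ> r" M] M by (auto simp: o_assoc)
    have "filterlim (m \<circ> r \<circ> s) at_top sequentially"
      using filterlim_compose[OF m filterlim_subseq[OF strict_mono_o[OF r s]]] by (simp add: o_def)
    then have "w \<in> V"
      using quasi_nonconforming_weak_limit[OF T p qnc _ _ ws] vs by simp
    then have "w = v"
      using weak_limit_eq_of_proj_weak_conv[OF j sH cH jVH vV _ wH strict_mono_o[OF r s]] ws
      by (simp add: o_assoc)
    with s ws show "\<exists>s. strict_mono s \<and> weak_conv_on UNIV norm (vs \<circ> r \<circ> s) v"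
      by blast
  qed
qed

lemma quasi_nonconforming_approximation:
  fixes V :: "'x::real_normed_vector set" and j :: "'x \<Rightarrow> 'y::real_normed_vector"
  assumes j: "bounded_linear j" and HV: "H \<subseteq> closure (j ` V)"
    and qnc: "quasi_nonconforming T p V Vs" and h: "h \<in> H"
  obtains m vs where "filterlim m at_top sequentially" "\<And>n. vs n \<in> Vs (m n)" "(\<lambda>n. j (vs n)) \<longlonglongrightarrow> h"
proof -
  obtain D where D: "V \<subseteq> closure D"
    and approx: "\<And>d. d \<in> D \<Longrightarrow> \<exists>vs. (\<forall>n. vs n \<in> Vs n) \<and> vs \<longlonglongrightarrow> d"
    using qnc unfolding quasi_nonconforming_def by blast
  have "j ` V \<subseteq> closure (j ` D)"
    using image_mono[OF D] image_closure_subset[OF linear_continuous_on[OF j] closed_closure closure_subset]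
    by (rule order_trans)
  then have hD: "h \<in> closure (j ` D)"
    using HV h closure_mono closure_closure by blast
  have "\<exists>n\<ge>k. \<exists>y\<in>Vs n. dist (j y) h < 1 / Suc k" for k
  proof -
    obtain d where "d \<in> D" and d: "dist (j d) h < 1 / Suc k"
      using hD[unfolded closure_approachable, rule_format, of "1 / Suc k"] by auto
    obtain vs where vs: "\<And>n. vs n \<in> Vs n" and "vs \<longlonglongrightarrow> d"
      using approx[OF \<open>d \<in> D\<close>] by blast
    then have "(\<lambda>n. dist (j (vs n)) h) \<longlonglongrightarrow> dist (j d) h"
      by (intro tendsto_dist bounded_linear.tendsto[OF j] tendsto_const)
    then have "eventually (\<lambda>n. dist (j (vs n)) h < 1 / Suc k) sequentially"
      using d by (rule order_tendstoD)
    then obtain n where "n \<ge> k" "dist (j (vs n)) h < 1 / Suc k"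
      unfolding eventually_sequentially by (meson nat_le_linear)
    then show ?thesis using vs by blast
  qed
  then obtain m y where m: "\<And>k. m k \<ge> k" and y: "\<And>k. y k \<in> Vs (m k)"
    and close: "\<And>k. dist (j (y k)) h < 1 / Suc k"
    by metis
  have "filterlim m at_top sequentially"
    using m by (intro filterlim_at_top_mono[OF filterlim_ident]) simp
  moreover have "(\<lambda>k. j (y k)) \<longlonglongrightarrow> h"
    using LIMSEQ_norm_0[of "\<lambda>k. j (y k) - h"] close by (simp add: dist_norm LIM_zero_cancel)
  ultimately show ?thesis
    using that y by blast
qed

theorem mainTheorem4:
  fixes V :: "'x::banach set" and H :: "'y::{real_inner, complete_space} set"
    and j :: "'x \<Rightarrow> 'y" and Vs :: "nat \<Rightarrow> 'x set" and T p :: real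
  assumes evVH: "evolution_triple V H j"
    and evXY: "evolution_triple (UNIV :: 'x set) (UNIV :: 'y set) j"
    and T: "0 < T" and p: "1 < p"
    and qnc: "quasi_nonconforming T p V Vs"
  shows
   "(\<forall>(m :: nat \<Rightarrow> nat) vs v. filterlim m at_top sequentially \<longrightarrow> (\<forall>n. vs n \<in> Vs (m n)) \<longrightarrow>
        weak_conv_on UNIV norm vs v \<longrightarrow> v \<in> V)
  \<and> (\<forall>(m :: nat \<Rightarrow> nat) vs v. filterlim m at_top sequentially \<longrightarrow> (\<forall>n. vs n \<in> Vs (m n)) \<longrightarrow>
        bdd_above (range (\<lambda>n. norm (vs n))) \<longrightarrow> v \<in> V \<longrightarrow>
        (weak_conv_on UNIV norm vs v \<longleftrightarrow>
         weak_conv_on H norm (\<lambda>n. orth_proj H (j (vs n))) (j v)))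
  \<and> (\<forall>h\<in>H. \<exists>(m :: nat \<Rightarrow> nat) vs. filterlim m at_top sequentially \<and> (\<forall>n. vs n \<in> Vs (m n)) \<and>
        (\<lambda>n. j (vs n)) \<longlonglongrightarrow> h)"
proof -
  have R: "reflexive_on (UNIV :: 'x set)" and inj: "inj j" and "linear j"
    and "\<exists>C. \<forall>v\<in>UNIV. norm (j v) \<le> C * norm v"
    using evXY unfolding evolution_triple_def by blast+
  then have j: "bounded_linear j"
    by (auto simp: bounded_linear_def bounded_linear_axioms_def mult.commute)
  have sH: "subspace H" and cH: "complete H" and jVH: "j ` V \<subseteq> H" and HV: "H \<subseteq> closure (j ` V)"
    using evVH unfolding evolution_triple_def by blast+
  show ?thesis
  proof (intro conjI allI impI ballI)
    fix m :: "nat \<Rightarrow> nat" and vs v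
    assume "filterlim m at_top sequentially" "\<forall>n. vs n \<in> Vs (m n)"
    then show "weak_conv_on UNIV norm vs v \<Longrightarrow> v \<in> V"
      using quasi_nonconforming_weak_limit[OF T p qnc] by blast
    show "bdd_above (range (\<lambda>n. norm (vs n))) \<Longrightarrow> v \<in> V \<Longrightarrow>
        weak_conv_on UNIV norm vs v \<longleftrightarrow> weak_conv_on H norm (\<lambda>n. orth_proj H (j (vs n))) (j v)"
      using quasi_nonconforming_weak_conv_iff[OF T p qnc R j inj sH cH jVH] \<open>filterlim m at_top sequentially\<close>
        \<open>\<forall>n. vs n \<in> Vs (m n)\<close> by blast
  next
    fix h assume "h \<in> H"
    then show "\<exists>(m :: nat \<Rightarrow> nat) vs. filterlim m at_top sequentially \<and> (\<forall>n. vs n \<in> Vs (m n)) \<and>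
        (\<lambda>n. j (vs n)) \<longlonglongrightarrow> h"
      using quasi_nonconforming_approximation[OF j HV qnc] by metis
  qed
qed

end
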